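(* For every field $K$, the set $\widetilde{K}$ is a subfield of $K$.
   Context: Let $K$ be a field. For $r\in K$, a finite set $A(r)$ with $\{r\}\subseteq A(r)\subseteq K$ is called adequate for $r$ if every mapping $f:A(r)\to K$ satisfying (1) if $1\in A(r)$ then $f(1)=1$; (2) if $a,b\in A(r)$ and $a+b\in A(r)$ then $f(a+b)=f(a)+f(b)$; (3) if $a,b\in A(r)$ and $a\cdot b\in A(r)$ then $f(a\cdot b)=f(a)\cdot f(b)$, also satisfies $f(r)=r$. $\widetilde{K}$ denotes the set of all $r\in K$ for which some finite set adequate for $r$ exists. *)

theory Defs
  imports Main
begin

definition adequacy_conds :: "'a::field set \<Rightarrow> ('a \<Rightarrow> 'a) \<Rightarrow> bool" where
  "adequacy_conds A f \<longleftrightarrow>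
     (1 \<in> A \<longrightarrow> f 1 = 1) \<and>
     (\<forall>a\<in>A. \<forall>b\<in>A. a + b \<in> A \<longrightarrow> f (a + b) = f a + f b) \<and>
     (\<forall>a\<in>A. \<forall>b\<in>A. a * b \<in> A \<longrightarrow> f (a * b) = f a * f b)"

text \<open>A finite set A with r in A is adequate for r. Only the values of f on A matter,
  so quantifying over all functions K \<Rightarrow> K is the same as over all maps A \<rightarrow> K.\<close>
definition adequate :: "'a::field set \<Rightarrow> 'a \<Rightarrow> bool" where
  "adequate A r \<longleftrightarrow> finite A \<and> r \<in> A \<and> (\<forall>f. adequacy_conds A f \<longrightarrow> f r = r)"

definition Ktilde :: "'a::field set" where
  "Ktilde = {r. \<exists>A. adequate A r}"

definition is_subfield :: "'a::field set \<Rightarrow> bool" where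
  "is_subfield S \<longleftrightarrow> 0 \<in> S \<and> 1 \<in> S \<and>
     (\<forall>x\<in>S. \<forall>y\<in>S. x + y \<in> S \<and> x * y \<in> S) \<and>
     (\<forall>x\<in>S. - x \<in> S) \<and>
     (\<forall>x\<in>S. x \<noteq> 0 \<longrightarrow> inverse x \<in> S)"

end

theory Submission
  imports Defs
begin

text \<open>Enlarging a finite set only adds constraints on \<open>f\<close>, so the union of adequate sets
  for \<open>x\<close> and \<open>y\<close> forces \<open>f\<close> to fix both. Adding \<open>x + y\<close>, \<open>x * y\<close>, \<open>-x\<close> (with \<open>0\<close>)
  or \<open>inverse x\<close> (with \<open>1\<close>) to that union then forces \<open>f\<close> to fix the new element too, because
  on these elements \<open>f\<close> behaves like a ring homomorphism.\<close>

lemma adequacy_conds_subset: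
  "adequacy_conds B f \<Longrightarrow> A \<subseteq> B \<Longrightarrow> adequacy_conds A f"
  unfolding adequacy_conds_def by blast

lemma adequacy_conds_add:
  "adequacy_conds A f \<Longrightarrow> a \<in> A \<Longrightarrow> b \<in> A \<Longrightarrow> a + b \<in> A \<Longrightarrow> f (a + b) = f a + f b"
  unfolding adequacy_conds_def by blast

lemma adequacy_conds_mult:
  "adequacy_conds A f \<Longrightarrow> a \<in> A \<Longrightarrow> b \<in> A \<Longrightarrow> a * b \<in> A \<Longrightarrow> f (a * b) = f a * f b"
  unfolding adequacy_conds_def by blast

lemma adequacy_conds_one: "adequacy_conds A f \<Longrightarrow> 1 \<in> A \<Longrightarrow> f 1 = 1"
  unfolding adequacy_conds_def by blast

lemma adequacy_conds_zero:
  assumes "adequacy_conds A f" "0 \<in> A"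
  shows "f 0 = 0"
proof -
  have "f 0 = f 0 + f 0"
    using adequacy_conds_add[OF assms assms(2)] assms(2) by simp
  then show ?thesis by (metis add_cancel_right_right)
qed

lemma adequacy_conds_uminus:
  assumes f: "adequacy_conds A f" and "0 \<in> A" "x \<in> A" "- x \<in> A"
  shows "f (- x) = - f x"
proof -
  have "f x + f (- x) = 0"
    using adequacy_conds_add[OF f, of x "- x"] adequacy_conds_zero[OF f] assms by simp
  then show ?thesis by (simp add: eq_neg_iff_add_eq_0 add.commute)
qed

lemma adequacy_conds_inverse:
  assumes f: "adequacy_conds A f" and "1 \<in> A" "x \<in> A" "inverse x \<in> A" "x \<noteq> 0"
  shows "f (inverse x) = inverse (f x)"
proof -
  have "f x * f (inverse x) = 1"
    using adequacy_conds_mult[OF f, of x "inverse x"] adequacy_conds_one[OF f] assms by simp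
  then show ?thesis by (simp add: inverse_unique)
qed

lemma Ktilde_if_determined:
  assumes "finite X" "X \<subseteq> Ktilde" "finite E" "r \<in> E"
    and determined: "\<And>f. adequacy_conds (X \<union> E) f \<Longrightarrow> \<forall>x\<in>X. f x = x \<Longrightarrow> f r = r"
  shows "r \<in> Ktilde"
proof -
  have "\<forall>x\<in>X. \<exists>A. adequate A x"
    using \<open>X \<subseteq> Ktilde\<close> unfolding Ktilde_def by blast
  then obtain Ad where Ad: "\<forall>x\<in>X. adequate (Ad x) x"
    by (metis bchoice)
  define A where "A = (\<Union>x\<in>X. Ad x) \<union> E"
  have "X \<union> E \<subseteq> A"
    using Ad unfolding A_def adequate_def by blast
  have "adequate A r"
    unfolding adequate_def
  proof (intro conjI allI impI)
    show "finite A"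
      using Ad \<open>finite X\<close> \<open>finite E\<close> unfolding A_def adequate_def by auto
    show "r \<in> A"
      using \<open>r \<in> E\<close> unfolding A_def by blast
    fix f assume f: "adequacy_conds A f"
    have "\<forall>x\<in>X. f x = x"
      using Ad adequacy_conds_subset[OF f] unfolding A_def adequate_def by blast
    then show "f r = r"
      using determined adequacy_conds_subset[OF f \<open>X \<union> E \<subseteq> A\<close>] by blast
  qed
  then show ?thesis
    unfolding Ktilde_def by blast
qed

lemma zero_in_Ktilde: "0 \<in> Ktilde"
  by (rule Ktilde_if_determined[of "{}" "{0}"]) (auto intro: adequacy_conds_zero)

lemma one_in_Ktilde: "1 \<in> Ktilde"
  by (rule Ktilde_if_determined[of "{}" "{1}"]) (auto intro: adequacy_conds_one)

lemma add_in_Ktilde: "x \<in> Ktilde \<Longrightarrow> y \<in> Ktilde \<Longrightarrow> x + y \<in> Ktilde"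
  by (rule Ktilde_if_determined[of "{x, y}" "{x + y}"]) (auto simp: adequacy_conds_add)

lemma mult_in_Ktilde: "x \<in> Ktilde \<Longrightarrow> y \<in> Ktilde \<Longrightarrow> x * y \<in> Ktilde"
  by (rule Ktilde_if_determined[of "{x, y}" "{x * y}"]) (auto simp: adequacy_conds_mult)

lemma uminus_in_Ktilde: "x \<in> Ktilde \<Longrightarrow> - x \<in> Ktilde"
  by (rule Ktilde_if_determined[of "{x}" "{0, - x}"]) (auto simp: adequacy_conds_uminus)

lemma inverse_in_Ktilde: "x \<in> Ktilde \<Longrightarrow> x \<noteq> 0 \<Longrightarrow> inverse x \<in> Ktilde"
  by (rule Ktilde_if_determined[of "{x}" "{1, inverse x}"]) (auto simp: adequacy_conds_inverse)

theorem theorem1: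
  shows "is_subfield (Ktilde :: 'a::field set)"
  unfolding is_subfield_def
  by (simp add: zero_in_Ktilde one_in_Ktilde add_in_Ktilde mult_in_Ktilde
      uminus_in_Ktilde inverse_in_Ktilde)

end
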